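(* Let $\varepsilon>0$, let $\Sigma_1,\ldots,\Sigma_k$ be real symmetric positive definite $d\times d$ matrices, and let $\lambda_1,\ldots,\lambda_k>0$ with $\sum_{i=1}^k\lambda_i=1$. Then there exists a unique positive definite $\Sigma\in\mathcal{M}_{d\times d}(\mathbb{R})$ such that $$\sum_{i=1}^k\lambda_i\Big(\Sigma^{-1/2}\big(\Sigma^{1/2}\Sigma_i\Sigma^{1/2}+(\tfrac{\varepsilon}{4})^2I_d\big)^{1/2}\Sigma^{-1/2}+\tfrac{\varepsilon}{4}\Sigma^{-1}\Big)=I_d.$$
   Context: $A^{1/2}$ denotes the unique symmetric positive definite square root of a symmetric positive definite matrix $A$. *)

theory Defs
  imports "HOL-Analysis.Analysis"
begin

text \<open>Real d x d matrices are rendered as \<open>real^'d^'d\<close>, with d = CARD('d).\<close>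

definition sym_mat :: "real^'n^'n \<Rightarrow> bool" where
  "sym_mat A \<longleftrightarrow> transpose A = A"

definition pos_def :: "real^'n^'n \<Rightarrow> bool" where
  "pos_def A \<longleftrightarrow> sym_mat A \<and> (\<forall>x. x \<noteq> 0 \<longrightarrow> x \<bullet> (A *v x) > 0)"

definition mat_sqrt :: "real^'n^'n \<Rightarrow> real^'n^'n" where
  "mat_sqrt A = (THE B. pos_def B \<and> B ** B = A)"

end

theory Submission
  imports Defs
begin

text \<open>Write \<open>c = \<epsilon>/4\<close> and \<open>P\<^sub>i(S) = (S\<^sup>1\<^sup>/\<^sup>2 \<Sigma>\<^sub>i S\<^sup>1\<^sup>/\<^sup>2 + c\<^sup>2 I)\<^sup>1\<^sup>/\<^sup>2\<close>.
  Conjugating by \<open>S\<^sup>1\<^sup>/\<^sup>2\<close>, the equation becomes the fixed-point equation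
  \<open>S = c I + \<Sum>\<^sub>i \<lambda>\<^sub>i P\<^sub>i(S)\<close>. Since \<open>c I < P\<^sub>i(S) \<le> (c + s) I\<close> whenever \<open>S \<le> (2c + s) I\<close> and
  all \<open>\<Sigma>\<^sub>i \<le> s I\<close>, the right-hand side maps the compact convex set
  \<open>{S. 2c I \<le> S \<le> (2c + s) I}\<close> continuously into itself, and Brouwer's theorem gives a solution.

  For uniqueness put \<open>G\<^sub>i = S\<^sup>-\<^sup>1\<^sup>/\<^sup>2 (P\<^sub>i(S) - c I) S\<^sup>-\<^sup>1\<^sup>/\<^sup>2\<close>: it is positive definite, solves
  \<open>G S G + 2c G = \<Sigma>\<^sub>i\<close>, and the equation reads \<open>\<Sum>\<^sub>i \<lambda>\<^sub>i G\<^sub>i + 2c S\<^sup>-\<^sup>1 = I\<close>. For two solutions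
  \<open>S, S'\<close> the quadratic equations force \<open>tr ((G\<^sub>i - G'\<^sub>i)(S - S')) \<le> 0\<close>, while
  \<open>\<Sum>\<^sub>i \<lambda>\<^sub>i (G\<^sub>i - G'\<^sub>i) = 2c S\<^sup>-\<^sup>1 (S - S') S'\<^sup>-\<^sup>1\<close> makes the weighted sum of these traces
  \<open>2c tr ((S - S') S'\<^sup>-\<^sup>1 (S - S') S\<^sup>-\<^sup>1) \<ge> 0\<close>, with equality only if \<open>S = S'\<close>.\<close>

lemma matrix_add_rdistrib: "((A::'a::semiring_1^'n^'m) + B) ** C = A ** C + B ** C"
  by (simp add: matrix_matrix_mult_def vec_eq_iff distrib_right sum.distrib)

lemma matrix_diff_ldistrib: "(A::'a::ring_1^'n^'m) ** (B - C) = A ** B - A ** C"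
  by (simp add: matrix_matrix_mult_def vec_eq_iff right_diff_distrib sum_subtractf)

lemma matrix_diff_rdistrib: "((A::'a::ring_1^'n^'m) - B) ** C = A ** C - B ** C"
  by (simp add: matrix_matrix_mult_def vec_eq_iff left_diff_distrib sum_subtractf)

lemma matrix_mul_uminus_right: "(A::'a::ring_1^'n^'m) ** (- B) = - (A ** B)"
  by (simp add: matrix_matrix_mult_def vec_eq_iff sum_negf)

lemma matrix_mul_sum_left: "(\<Sum>i\<in>I. f i) ** (B::'a::semiring_1^'p^'n) = (\<Sum>i\<in>I. f i ** B)"
  by (induction I rule: infinite_finite_induct) (simp_all add: matrix_add_rdistrib)

lemma sum_matrix_vector_mult: "(\<Sum>i\<in>I. (f i :: 'a::semiring_1^'n^'m)) *v x = (\<Sum>i\<in>I. f i *v x)"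
  by (induction I rule: infinite_finite_induct) (simp_all add: matrix_vector_mult_add_rdistrib)

lemmas matrix_vector_simps = matrix_vector_mul_assoc[symmetric] matrix_vector_mult_add_rdistrib
  matrix_vector_mult_diff_rdistrib matrix_vector_right_distrib matrix_vector_mult_diff_distrib
  matrix_vector_mult_scaleR scaleR_matrix_vector_assoc[symmetric]

lemma trace_scaleR: "trace (r *\<^sub>R (A::real^'n^'n)) = r * trace A"
  by (simp add: trace_def sum_distrib_left)

lemma trace_uminus: "trace (- (A::'a::ring_1^'n^'n)) = - trace A"
  by (simp add: trace_def sum_negf)

lemma trace_sum: "trace (\<Sum>i\<in>I. (f i::'a::comm_semiring_1^'n^'n)) = (\<Sum>i\<in>I. trace (f i))"
  by (induction I rule: infinite_finite_induct) (simp_all add: trace_add trace_0[simplified])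

lemma trace_transpose_mul_mul:
  fixes M P :: "real^'n^'n"
  shows "trace (transpose M ** P ** M) = (\<Sum>j\<in>UNIV. column j M \<bullet> (P *v column j M))"
proof -
  have "(transpose M ** P ** M) $ j $ j = column j M \<bullet> (P *v column j M)" for j
  proof -
    have "(transpose M ** P ** M) $ j $ j = (\<Sum>k\<in>UNIV. (\<Sum>l\<in>UNIV. M$l$j * P$l$k) * M$k$j)"
      by (simp add: matrix_matrix_mult_def transpose_def)
    also have "\<dots> = (\<Sum>k\<in>UNIV. \<Sum>l\<in>UNIV. M$l$j * P$l$k * M$k$j)"
      by (simp add: sum_distrib_right)
    also have "\<dots> = (\<Sum>l\<in>UNIV. \<Sum>k\<in>UNIV. M$l$j * P$l$k * M$k$j)"
      by (rule sum.swap)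
    also have "\<dots> = column j M \<bullet> (P *v column j M)"
      by (simp add: column_def matrix_vector_mult_def inner_vec_def sum_distrib_left mult.assoc)
    finally show ?thesis .
  qed
  then show ?thesis by (simp add: trace_def)
qed

lemma inner_matrix_eq_trace:
  fixes D N :: "real^'n^'n"
  shows "D \<bullet> N = trace (transpose D ** N)"
  by (simp add: trace_def matrix_matrix_mult_def transpose_def inner_vec_def) (rule sum.swap)

lemma inner_matrix_self_columns:
  fixes D :: "real^'n^'n"
  shows "D \<bullet> D = (\<Sum>j\<in>UNIV. column j D \<bullet> column j D)"
  using trace_transpose_mul_mul[of D "mat 1"] by (simp add: inner_matrix_eq_trace)

section \<open>Symmetric and positive definite matrices\<close>

lemma sym_mat_iff_inner:
  fixes A :: "real^'n^'n"
  shows "sym_mat A \<longleftrightarrow> (\<forall>x y. x \<bullet> (A *v y) = (A *v x) \<bullet> y)"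
proof
  assume "sym_mat A"
  then have "transpose A = A" by (simp add: sym_mat_def)
  then show "\<forall>x y. x \<bullet> (A *v y) = (A *v x) \<bullet> y"
    by (metis dot_lmul_matrix transpose_matrix_vector)
next
  assume h: "\<forall>x y. x \<bullet> (A *v y) = (A *v x) \<bullet> y"
  have "transpose A $ i $ j = A $ i $ j" for i j
    using h[rule_format, of "axis j 1" "axis i 1"]
    by (simp add: transpose_def matrix_vector_mult_basis column_def inner_axis' inner_axis)
  then show "sym_mat A" by (simp add: sym_mat_def vec_eq_iff)
qed

lemma sym_mat_inner: "sym_mat (A::real^'n^'n) \<Longrightarrow> x \<bullet> (A *v y) = (A *v x) \<bullet> y"
  using sym_mat_iff_inner by blast

lemma sym_mat_add: "sym_mat (A::real^'n^'n) \<Longrightarrow> sym_mat B \<Longrightarrow> sym_mat (A + B)"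
  by (simp add: sym_mat_def transpose_def vec_eq_iff)

lemma sym_mat_diff: "sym_mat (A::real^'n^'n) \<Longrightarrow> sym_mat B \<Longrightarrow> sym_mat (A - B)"
  by (simp add: sym_mat_def transpose_def vec_eq_iff)

lemma sym_mat_scaleR: "sym_mat (A::real^'n^'n) \<Longrightarrow> sym_mat (r *\<^sub>R A)"
  by (simp add: sym_mat_def transpose_scalar)

lemma sym_mat_mat: "sym_mat (mat r :: real^'n^'n)"
  by (simp add: sym_mat_def)

lemma sym_mat_sum: "(\<And>i. i \<in> I \<Longrightarrow> sym_mat (f i :: real^'n^'n)) \<Longrightarrow> sym_mat (\<Sum>i\<in>I. f i)"
  by (induction I rule: infinite_finite_induct) (auto simp: sym_mat_add sym_mat_mat[of 0, simplified])

lemma pos_def_sym: "pos_def A \<Longrightarrow> sym_mat A"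
  by (simp add: pos_def_def)

lemma pos_def_quadratic_nonneg: "pos_def A \<Longrightarrow> 0 \<le> x \<bullet> (A *v x)"
  by (cases "x = 0") (auto simp: pos_def_def less_imp_le)

lemma pos_def_add_scaled_identity:
  fixes A :: "real^'n^'n"
  assumes "pos_def A" "0 \<le> c"
  shows "pos_def (A + c *\<^sub>R mat 1)"
  unfolding pos_def_def
proof (intro conjI allI impI)
  show "sym_mat (A + c *\<^sub>R mat 1)"
    by (intro sym_mat_add sym_mat_scaleR sym_mat_mat pos_def_sym assms(1))
  fix x :: "real^'n" assume "x \<noteq> 0"
  then have "x \<bullet> (A *v x) > 0" using assms(1) by (simp add: pos_def_def)
  moreover have "c * (x \<bullet> x) \<ge> 0" using assms(2) by simp
  ultimately show "x \<bullet> ((A + c *\<^sub>R mat 1) *v x) > 0"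
    by (simp add: matrix_vector_simps inner_add_right)
qed

lemma pos_def_invertible:
  fixes A :: "real^'n^'n"
  assumes "pos_def A"
  shows "invertible A"
proof -
  have "inj ((*v) A)"
  proof (rule injI)
    fix x y assume "A *v x = A *v y"
    then have "(x - y) \<bullet> (A *v (x - y)) = 0" by (simp add: matrix_vector_mult_diff_distrib)
    then show "x = y" using assms unfolding pos_def_def by (metis less_irrefl right_minus_eq)
  qed
  then show ?thesis using matrix_left_invertible_injective invertible_left_inverse by blast
qed

lemma matrix_inv_right:
  assumes "invertible (A::real^'n^'n)"
  shows "A ** matrix_inv A = mat 1"
  using someI_ex[OF assms[unfolded invertible_def]] by (simp add: matrix_inv_def)

lemma matrix_inv_left:
  assumes "invertible (A::real^'n^'n)"
  shows "matrix_inv A ** A = mat 1"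
  using someI_ex[OF assms[unfolded invertible_def]] by (simp add: matrix_inv_def)

lemma pos_def_matrix_inv:
  fixes G :: "real^'n^'n"
  assumes G: "pos_def G"
  shows "pos_def (matrix_inv G)"
proof -
  define H where "H = matrix_inv G"
  have GH: "G ** H = mat 1" using matrix_inv_right[OF pos_def_invertible[OF G]] by (simp add: H_def)
  have "transpose G = G" using G by (simp add: pos_def_def sym_mat_def)
  then have "transpose H ** G = mat 1" by (metis GH matrix_transpose_mul transpose_mat)
  then have "transpose H ** (G ** H) = H" by (simp add: matrix_mul_assoc)
  then have "transpose H = H" by (simp add: GH)
  then show ?thesis unfolding pos_def_def sym_mat_def H_def[symmetric]
  proof (intro conjI allI impI)
    fix x :: "real^'n" assume x: "x \<noteq> 0"
    have xGy: "x = G *v (H *v x)" by (simp add: matrix_vector_mul_assoc GH)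
    then have "H *v x \<noteq> 0" using x by auto
    then have "(H *v x) \<bullet> (G *v (H *v x)) > 0" using G by (simp add: pos_def_def)
    then show "x \<bullet> (H *v x) > 0" by (simp flip: xGy add: inner_commute)
  qed
qed

lemma pos_def_congruence:
  fixes T Q :: "real^'n^'n"
  assumes T: "sym_mat T" "invertible T" and Q: "pos_def Q"
  shows "pos_def (T ** Q ** T)"
  unfolding pos_def_def
proof (intro conjI allI impI)
  have quad: "x \<bullet> ((T ** Q ** T) *v y) = (T *v x) \<bullet> (Q *v (T *v y))" for x y
    by (simp add: matrix_vector_mul_assoc[symmetric] sym_mat_inner[OF T(1)])
  show "sym_mat (T ** Q ** T)"
    unfolding sym_mat_iff_inner quad
    using sym_mat_inner[OF pos_def_sym[OF Q]] by (simp add: quad inner_commute)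
  fix x :: "real^'n" assume "x \<noteq> 0"
  then have "T *v x \<noteq> 0" using inj_matrix_vector_mult[OF T(2)] by (metis injD matrix_vector_mult_0_right)
  then show "x \<bullet> ((T ** Q ** T) *v x) > 0" using Q by (simp add: quad pos_def_def)
qed

section \<open>Orthonormal eigenbases of symmetric matrices\<close>

definition orthonormal_eigenbasis :: "real^'n^'n \<Rightarrow> (real^'n) set \<Rightarrow> bool" where
  "orthonormal_eigenbasis A C \<longleftrightarrow> finite C \<and> pairwise orthogonal C \<and> (\<forall>c\<in>C. norm c = 1)
     \<and> (\<forall>c\<in>C. A *v c = (c \<bullet> (A *v c)) *\<^sub>R c) \<and> (\<forall>x. (\<Sum>c\<in>C. (x \<bullet> c) *\<^sub>R c) = x)"

lemma nonneg_quadratic_imp_no_linear_term: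
  fixes a b :: real
  assumes "\<And>t. 0 \<le> b * t + a * t\<^sup>2"
  shows "b = 0"
proof (rule ccontr)
  assume "b \<noteq> 0"
  define k where "k = \<bar>a\<bar> + 1"
  have k: "k > 0" "a \<le> k - 1" by (simp_all add: k_def)
  define t where "t = - b / k"
  have "0 \<le> b * t + a * t\<^sup>2" by (rule assms)
  also have "\<dots> \<le> b * t + (k - 1) * t\<^sup>2" using k by (intro add_left_mono mult_right_mono) auto
  also have "\<dots> = - (b / k)\<^sup>2"
    using k by (simp add: t_def field_simps power2_eq_square)
  also have "\<dots> < 0" using \<open>b \<noteq> 0\<close> k by simp
  finally show False by simp
qed

text \<open>A minimiser of the Rayleigh quotient on an invariant subspace is an eigenvector: otherwise
  moving it towards its residual \<open>A v - \<mu> v\<close> would decrease the quotient to first order.\<close>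

lemma rayleigh_minimizer_eigenvector:
  fixes A :: "real^'n^'n"
  assumes sym: "sym_mat A" and V: "subspace V" and inv: "\<And>x. x \<in> V \<Longrightarrow> A *v x \<in> V"
    and v: "v \<in> V" "norm v = 1"
    and min: "\<And>x. x \<in> V \<Longrightarrow> norm x = 1 \<Longrightarrow> v \<bullet> (A *v v) \<le> x \<bullet> (A *v x)"
  shows "A *v v = (v \<bullet> (A *v v)) *\<^sub>R v"
proof -
  define \<mu> where "\<mu> = v \<bullet> (A *v v)"
  have min': "\<mu> * (x \<bullet> x) \<le> x \<bullet> (A *v x)" if "x \<in> V" for x
  proof (cases "x = 0")
    case False
    define u where "u = (1 / norm x) *\<^sub>R x"
    have "\<mu> \<le> u \<bullet> (A *v u)"
      unfolding \<mu>_def using min[of u] that V False by (simp add: u_def subspace_scale)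
    also have "u \<bullet> (A *v u) = (x \<bullet> (A *v x)) / (norm x)\<^sup>2"
      by (simp add: u_def matrix_vector_mult_scaleR power2_eq_square)
    finally show ?thesis using False by (simp add: field_simps power2_norm_eq_inner)
  qed simp
  define w where "w = A *v v - \<mu> *\<^sub>R v"
  have wV: "w \<in> V" using inv v V by (simp add: w_def subspace_diff subspace_scale)
  have vv: "v \<bullet> v = 1" using v by (simp add: norm_eq_1)
  have wv: "w \<bullet> v = 0" "v \<bullet> w = 0"
    by (simp_all add: w_def inner_diff_left inner_diff_right vv \<mu>_def inner_commute)
  have wAv: "w \<bullet> (A *v v) = w \<bullet> w" "v \<bullet> (A *v w) = w \<bullet> w"
    using wv sym_mat_inner[OF sym, of v w]
    by (simp_all add: w_def inner_diff_left inner_diff_right inner_commute)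
  have "0 \<le> (2 * (w \<bullet> w)) * t + (w \<bullet> (A *v w) - \<mu> * (w \<bullet> w)) * t\<^sup>2" for t
  proof -
    have "v + t *\<^sub>R w \<in> V" using v wV V by (simp add: subspace_add subspace_scale)
    from min'[OF this] show ?thesis
      using wv wAv vv
      by (simp add: inner_add_left inner_add_right matrix_vector_right_distrib
          matrix_vector_mult_scaleR \<mu>_def power2_eq_square algebra_simps)
  qed
  then have "2 * (w \<bullet> w) = 0" by (rule nonneg_quadratic_imp_no_linear_term)
  then show ?thesis by (simp add: w_def \<mu>_def)
qed

text \<open>Take a maximal orthonormal set \<open>C\<close> of eigenvectors. If it did not span, the minimiser of the
  Rayleigh quotient on the (invariant) orthogonal complement of \<open>C\<close> would extend it.\<close>

theorem orthonormal_eigenbasis_exists: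
  fixes A :: "real^'n^'n"
  assumes sym: "sym_mat A"
  obtains C where "orthonormal_eigenbasis A C"
proof -
  define P where "P C \<longleftrightarrow> pairwise orthogonal C \<and> (\<forall>c\<in>C. norm c = 1)
     \<and> (\<forall>c\<in>C. A *v c = (c \<bullet> (A *v c)) *\<^sub>R c)" for C :: "(real^'n) set"
  have indep: "independent C" if "P C" for C
    using that by (intro pairwise_orthogonal_independent) (auto simp: P_def)
  have P0: "P {}" by (simp add: P_def)
  have "card C \<le> DIM(real^'n)" if "P C" for C
    using independent_bound[OF indep[OF that]] by blast
  then have Pb: "\<forall>C. P C \<longrightarrow> card C < DIM(real^'n) + 1" by (simp add: less_Suc_eq_le)
  obtain C where PC: "P C" and maxC: "\<forall>D. P D \<longrightarrow> card D \<le> card C"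
    using ex_has_greatest_nat[OF P0 Pb] by blast
  have fC: "finite C" using indep[OF PC] independent_bound by blast
  have "span C = UNIV"
  proof (rule ccontr)
    assume "span C \<noteq> UNIV"
    then obtain z where z: "z \<noteq> 0" "\<forall>y\<in>span C. z \<bullet> y = 0"
      using span_not_UNIV_orthogonal by blast
    define V where "V = {y. \<forall>c\<in>C. orthogonal c y}"
    have V: "subspace V" unfolding V_def by (rule subspace_orthogonal_to_vectors)
    have zV: "z \<in> V" using z(2) span_base by (fastforce simp: V_def orthogonal_def inner_commute)
    have invV: "A *v y \<in> V" if "y \<in> V" for y
    proof -
      have "c \<bullet> (A *v y) = (c \<bullet> (A *v c)) * (c \<bullet> y)" if "c \<in> C" for c
        using sym_mat_inner[OF sym, of c y] PC that by (metis P_def inner_scaleR_left)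
      then show ?thesis using that by (simp add: V_def orthogonal_def)
    qed
    define S where "S = V \<inter> sphere 0 1"
    have "compact S"
      unfolding S_def using closed_subspace[OF V] compact_sphere by (rule closed_Int_compact)
    moreover have "(1 / norm z) *\<^sub>R z \<in> S" using z zV V by (simp add: S_def subspace_scale)
    then have "S \<noteq> {}" by blast
    moreover have "continuous_on S (\<lambda>x. x \<bullet> (A *v x))"
      by (intro continuous_intros linear_continuous_on matrix_vector_mul_bounded_linear)
    ultimately obtain v where vS: "v \<in> S" and vmin: "\<forall>y\<in>S. v \<bullet> (A *v v) \<le> y \<bullet> (A *v y)"
      using continuous_attains_inf by blast
    have vV: "v \<in> V" and nv: "norm v = 1" using vS by (auto simp: S_def)
    have Av: "A *v v = (v \<bullet> (A *v v)) *\<^sub>R v"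
      by (rule rayleigh_minimizer_eigenvector[OF sym V invV vV nv]) (use vmin in \<open>auto simp: S_def\<close>)
    have vC: "v \<notin> C" using vV nv by (auto simp: V_def orthogonal_def)
    have "P (insert v C)"
      using PC vV nv Av
      by (auto simp: P_def V_def pairwise_insert orthogonal_commute)
    then have "card (insert v C) \<le> card C" using maxC by blast
    then show False using vC fC by simp
  qed
  then have "(\<Sum>c\<in>C. (x \<bullet> c) *\<^sub>R c) = x" for x
    using PC fC by (intro orthonormal_basis_expand) (auto simp: P_def)
  then show thesis using PC fC that by (auto simp: orthonormal_eigenbasis_def P_def)
qed

lemma orthonormal_inner_sum:
  assumes "finite C" "pairwise orthogonal C" "norm c = 1" "c \<in> C"
  shows "c \<bullet> (\<Sum>c'\<in>C. f c' *\<^sub>R c') = f c"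
proof -
  have "c \<bullet> (\<Sum>c'\<in>C. f c' *\<^sub>R c') = (\<Sum>c'\<in>C. if c' = c then f c else 0)"
    unfolding inner_sum_right
    using assms by (intro sum.cong) (auto simp: pairwise_def orthogonal_def norm_eq_1)
  also have "\<dots> = f c" using assms by simp
  finally show ?thesis .
qed

context
  fixes A :: "real^'n^'n" and C :: "(real^'n) set"
  assumes C: "orthonormal_eigenbasis A C"
begin

lemma orthonormal_eigenbasis_finite: "finite C"
  using C by (simp add: orthonormal_eigenbasis_def)

lemma orthonormal_eigenbasis_norm: "c \<in> C \<Longrightarrow> norm c = 1"
  using C by (simp add: orthonormal_eigenbasis_def)

lemma orthonormal_eigenbasis_eigenvector: "c \<in> C \<Longrightarrow> A *v c = (c \<bullet> (A *v c)) *\<^sub>R c"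
  using C by (simp add: orthonormal_eigenbasis_def)

lemma orthonormal_eigenbasis_expansion: "(\<Sum>c\<in>C. (x \<bullet> c) *\<^sub>R c) = x"
  using C by (simp add: orthonormal_eigenbasis_def)

lemma orthonormal_eigenbasis_inner_sum: "c \<in> C \<Longrightarrow> c \<bullet> (\<Sum>c'\<in>C. f c' *\<^sub>R c') = f c"
  using C by (intro orthonormal_inner_sum) (auto simp: orthonormal_eigenbasis_def)

lemma orthonormal_eigenbasis_matrix_eq:
  fixes M N :: "real^'n^'m"
  assumes "\<And>c. c \<in> C \<Longrightarrow> M *v c = N *v c"
  shows "M = N"
proof (subst matrix_eq, intro allI)
  fix x
  have expand: "L *v x = (\<Sum>c\<in>C. (x \<bullet> c) *\<^sub>R (L *v c))" for L :: "real^'n^'m"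
    using arg_cong[OF orthonormal_eigenbasis_expansion[of x], of "\<lambda>y. L *v y"]
    by (simp add: vec.sum matrix_vector_mult_scaleR)
  show "M *v x = N *v x" unfolding expand[of M] expand[of N] using assms by simp
qed

lemma orthonormal_eigenbasis_apply: "A *v x = (\<Sum>c\<in>C. ((c \<bullet> (A *v c)) * (x \<bullet> c)) *\<^sub>R c)"
proof -
  have "A *v x = (\<Sum>c\<in>C. (x \<bullet> c) *\<^sub>R (A *v c))"
    by (subst orthonormal_eigenbasis_expansion[of x, symmetric]) (simp add: vec.sum matrix_vector_mult_scaleR)
  also have "\<dots> = (\<Sum>c\<in>C. ((c \<bullet> (A *v c)) * (x \<bullet> c)) *\<^sub>R c)"
    by (intro sum.cong refl) (subst orthonormal_eigenbasis_eigenvector, simp_all)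
  finally show ?thesis .
qed

lemma orthonormal_eigenbasis_parseval: "x \<bullet> x = (\<Sum>c\<in>C. (x \<bullet> c)\<^sup>2)"
  by (subst (2) orthonormal_eigenbasis_expansion[of x, symmetric])
    (simp add: inner_sum_right power2_eq_square)

lemma orthonormal_eigenbasis_quadratic_form: "x \<bullet> (A *v x) = (\<Sum>c\<in>C. (c \<bullet> (A *v c)) * (x \<bullet> c)\<^sup>2)"
  by (subst orthonormal_eigenbasis_apply) (simp add: inner_sum_right power2_eq_square mult.assoc)

lemma orthonormal_eigenbasis_nonzero:
  assumes "x \<noteq> 0"
  shows "\<exists>c\<in>C. x \<bullet> c \<noteq> 0"
proof (rule ccontr)
  assume "\<not> ?thesis"
  then have "x \<bullet> x = 0" by (simp add: orthonormal_eigenbasis_parseval[of x])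
  with assms show False by simp
qed

lemma pos_def_eigenvalue_pos:
  assumes "pos_def A" "c \<in> C"
  shows "c \<bullet> (A *v c) > 0"
proof -
  have "c \<noteq> 0" using orthonormal_eigenbasis_norm[OF assms(2)] by auto
  then show ?thesis using assms(1) by (simp add: pos_def_def)
qed

end

section \<open>The positive definite square root\<close>

lemma pos_def_sqrt_exists:
  fixes A :: "real^'n^'n"
  assumes pd: "pos_def A"
  obtains B where "pos_def B" "B ** B = A"
proof -
  obtain C where C: "orthonormal_eigenbasis A C"
    using orthonormal_eigenbasis_exists[OF pos_def_sym[OF pd]] .
  note fC = orthonormal_eigenbasis_finite[OF C]
  define \<mu> where "\<mu> c = c \<bullet> (A *v c)" for c
  have \<mu>: "\<mu> c > 0" if "c \<in> C" for c using pos_def_eigenvalue_pos[OF C pd that] by (simp add: \<mu>_def)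
  define f where "f x = (\<Sum>c\<in>C. (sqrt (\<mu> c) * (x \<bullet> c)) *\<^sub>R c)" for x
  have "linear f"
    by (rule linearI) (simp_all add: f_def inner_add_left distrib_left scaleR_add_left sum.distrib
        scaleR_sum_right mult_ac)
  then have B: "matrix f *v x = f x" for x by (simp add: matrix_works)
  have cf: "f x \<bullet> c = sqrt (\<mu> c) * (x \<bullet> c)" if "c \<in> C" for c x
  proof -
    have "c \<bullet> f x = sqrt (\<mu> c) * (x \<bullet> c)"
      unfolding f_def by (rule orthonormal_eigenbasis_inner_sum[OF C that])
    then show ?thesis by (metis inner_commute)
  qed
  have "pos_def (matrix f)"
    unfolding pos_def_def
  proof (intro conjI allI impI)
    show "sym_mat (matrix f)"
      by (simp add: sym_mat_iff_inner B f_def inner_sum_right inner_sum_left mult_ac inner_commute)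
    fix x :: "real^'n" assume "x \<noteq> 0"
    then obtain c0 where c0: "c0 \<in> C" "x \<bullet> c0 \<noteq> 0"
      using orthonormal_eigenbasis_nonzero[OF C] by blast
    have "0 < (\<Sum>c\<in>C. sqrt (\<mu> c) * (x \<bullet> c)\<^sup>2)"
      using \<mu> c0 by (intro sum_pos2[OF fC c0(1)]) (auto simp: less_imp_le)
    also have "\<dots> = x \<bullet> (matrix f *v x)"
      by (simp add: B f_def inner_sum_right power2_eq_square mult_ac)
    finally show "x \<bullet> (matrix f *v x) > 0" .
  qed
  moreover have "matrix f ** matrix f = A"
  proof (subst matrix_eq, intro allI)
    fix x
    have "(matrix f ** matrix f) *v x = f (f x)"
      by (simp add: matrix_vector_mul_assoc[symmetric] B)
    also have "\<dots> = (\<Sum>c\<in>C. (\<mu> c * (x \<bullet> c)) *\<^sub>R c)"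
      unfolding f_def[of "f x"]
    proof (intro sum.cong refl)
      fix c assume "c \<in> C"
      then show "(sqrt (\<mu> c) * (f x \<bullet> c)) *\<^sub>R c = (\<mu> c * (x \<bullet> c)) *\<^sub>R c"
        using \<mu>[of c] by (simp add: cf mult.assoc[symmetric])
    qed
    also have "\<dots> = A *v x" by (subst orthonormal_eigenbasis_apply[OF C]) (simp add: \<mu>_def)
    finally show "(matrix f ** matrix f) *v x = A *v x" .
  qed
  ultimately show thesis by (rule that)
qed

lemma pos_def_sqrt_unique:
  fixes B D :: "real^'n^'n"
  assumes B: "pos_def B" and D: "pos_def D" and eq: "B ** B = D ** D"
  shows "B = D"
proof -
  obtain C where C: "orthonormal_eigenbasis B C"
    using orthonormal_eigenbasis_exists[OF pos_def_sym[OF B]] .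
  have "D *v c = B *v c" if "c \<in> C" for c
  proof -
    define \<beta> where "\<beta> = c \<bullet> (B *v c)"
    have \<beta>: "\<beta> > 0" using pos_def_eigenvalue_pos[OF C B that] by (simp add: \<beta>_def)
    have Bc: "B *v c = \<beta> *\<^sub>R c" using orthonormal_eigenbasis_eigenvector[OF C that] by (simp add: \<beta>_def)
    have "D *v (D *v c) = (B ** B) *v c" by (simp add: matrix_vector_mul_assoc eq)
    also have "\<dots> = (\<beta> * \<beta>) *\<^sub>R c"
      by (simp add: matrix_vector_mul_assoc[symmetric] Bc matrix_vector_mult_scaleR)
    finally have DDc: "D *v (D *v c) = (\<beta> * \<beta>) *\<^sub>R c" .
    text \<open>\<open>w\<close> satisfies \<open>D w = -\<beta> w\<close>, impossible for a nonzero \<open>w\<close> as \<open>D\<close> is positive definite.\<close>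
    define w where "w = D *v c - \<beta> *\<^sub>R c"
    have "D *v w + \<beta> *\<^sub>R w = 0"
      by (simp add: w_def DDc matrix_vector_mult_diff_distrib matrix_vector_mult_scaleR algebra_simps)
    then have "w \<bullet> (D *v w) + \<beta> * (w \<bullet> w) = 0"
      by (metis inner_add_right inner_scaleR_right inner_zero_right)
    then have "w = 0" using pos_def_quadratic_nonneg[OF D, of w] \<beta>
      by (smt (verit) inner_ge_zero inner_eq_zero_iff mult_pos_pos)
    then show ?thesis by (simp add: w_def Bc)
  qed
  then show ?thesis by (rule orthonormal_eigenbasis_matrix_eq[OF C, symmetric])
qed

lemma mat_sqrt_eqI: "pos_def B \<Longrightarrow> B ** B = A \<Longrightarrow> mat_sqrt A = B"
  unfolding mat_sqrt_def by (rule the_equality) (auto intro: pos_def_sqrt_unique)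

lemma mat_sqrt_pos_def: "pos_def A \<Longrightarrow> pos_def (mat_sqrt A)"
  by (metis pos_def_sqrt_exists mat_sqrt_eqI)

lemma mat_sqrt_square: "pos_def A \<Longrightarrow> mat_sqrt A ** mat_sqrt A = A"
  by (metis pos_def_sqrt_exists mat_sqrt_eqI)

lemma matrix_inv_mat_sqrt:
  fixes S :: "real^'n^'n"
  assumes S: "pos_def S"
  shows "matrix_inv S = matrix_inv (mat_sqrt S) ** matrix_inv (mat_sqrt S)"
proof -
  define R where "R = mat_sqrt S"
  have R: "invertible R" "R ** R = S"
    using mat_sqrt_square[OF S] pos_def_invertible[OF mat_sqrt_pos_def[OF S]] by (simp_all add: R_def)
  have "(matrix_inv R ** matrix_inv R) ** S = mat 1"
    by (simp flip: R(2) add: matrix_mul_assoc matrix_inv_left[OF R(1)])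
      (simp flip: matrix_mul_assoc add: matrix_inv_left[OF R(1)])
  then have "(matrix_inv R ** matrix_inv R) ** S ** matrix_inv S = matrix_inv S" by simp
  then show ?thesis
    using matrix_inv_right[OF pos_def_invertible[OF S]] by (simp add: matrix_mul_assoc[symmetric] R_def)
qed

lemma pos_def_bounded_below:
  fixes X :: "real^'n^'n"
  assumes X: "pos_def X"
  obtains m where "m > 0" "\<And>x. m * (x \<bullet> x) \<le> x \<bullet> (X *v x)"
proof -
  obtain C where C: "orthonormal_eigenbasis X C"
    using orthonormal_eigenbasis_exists[OF pos_def_sym[OF X]] .
  note fC = orthonormal_eigenbasis_finite[OF C]
  define m where "m = Min (insert 1 ((\<lambda>e. e \<bullet> (X *v e)) ` C))"
  have "m > 0" unfolding m_def using fC pos_def_eigenvalue_pos[OF C X] by auto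
  moreover have "m * (x \<bullet> x) \<le> x \<bullet> (X *v x)" for x
  proof -
    have "m * (x \<bullet> x) = (\<Sum>e\<in>C. m * (x \<bullet> e)\<^sup>2)"
      by (simp add: orthonormal_eigenbasis_parseval[OF C, of x] sum_distrib_left)
    also have "\<dots> \<le> (\<Sum>e\<in>C. (e \<bullet> (X *v e)) * (x \<bullet> e)\<^sup>2)"
      using fC by (intro sum_mono mult_right_mono) (auto simp: m_def)
    also have "\<dots> = x \<bullet> (X *v x)" by (rule orthonormal_eigenbasis_quadratic_form[OF C, symmetric])
    finally show ?thesis .
  qed
  ultimately show thesis by (rule that)
qed

lemma pos_def_gt_of_square_gt:
  fixes P :: "real^'n^'n"
  assumes P: "pos_def P" and c: "0 \<le> c"
    and sq: "\<And>x. x \<noteq> 0 \<Longrightarrow> c\<^sup>2 * (x \<bullet> x) < x \<bullet> ((P ** P) *v x)"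
    and x: "x \<noteq> 0"
  shows "c * (x \<bullet> x) < x \<bullet> (P *v x)"
proof -
  obtain C where C: "orthonormal_eigenbasis P C"
    using orthonormal_eigenbasis_exists[OF pos_def_sym[OF P]] .
  have eigenvalue_gt: "c < e \<bullet> (P *v e)" if "e \<in> C" for e
  proof -
    define p where "p = e \<bullet> (P *v e)"
    have Pe: "P *v e = p *\<^sub>R e" using orthonormal_eigenbasis_eigenvector[OF C that] by (simp add: p_def)
    have ee: "e \<bullet> e = 1" using orthonormal_eigenbasis_norm[OF C that] by (simp add: norm_eq_1)
    then have "c\<^sup>2 < e \<bullet> ((P ** P) *v e)" using sq[of e] by force
    also have "\<dots> = p\<^sup>2"
      by (simp add: matrix_vector_mul_assoc[symmetric] Pe matrix_vector_mult_scaleR ee power2_eq_square)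
    finally show "c < p" using pos_def_eigenvalue_pos[OF C P that] c
      by (simp add: p_def power_less_imp_less_base)
  qed
  obtain e0 where e0: "e0 \<in> C" "x \<bullet> e0 \<noteq> 0" using orthonormal_eigenbasis_nonzero[OF C x] by blast
  have "0 < (\<Sum>e\<in>C. (e \<bullet> (P *v e) - c) * (x \<bullet> e)\<^sup>2)"
    using eigenvalue_gt e0
    by (intro sum_pos2[OF orthonormal_eigenbasis_finite[OF C] e0(1)]) (auto simp: less_imp_le)
  also have "\<dots> = x \<bullet> (P *v x) - c * (x \<bullet> x)"
    by (simp add: orthonormal_eigenbasis_quadratic_form[OF C, of x] orthonormal_eigenbasis_parseval[OF C, of x]
        left_diff_distrib sum_subtractf sum_distrib_left)
  finally show ?thesis by simp
qed

lemma pos_def_norm_diff_le_squares: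
  fixes X Y :: "real^'n^'n"
  assumes X: "pos_def X" and Y: "pos_def Y" and m: "\<And>x. m * (x \<bullet> x) \<le> x \<bullet> (X *v x)"
  shows "m * norm (X - Y) \<le> norm (X ** X - Y ** Y)"
proof -
  define D where "D = X - Y"
  have tD: "transpose D = D"
    using X Y by (simp add: D_def pos_def_def sym_mat_def transpose_def vec_eq_iff)
  have XY: "X ** X - Y ** Y = X ** D + D ** Y"
    by (simp add: D_def matrix_diff_ldistrib matrix_diff_rdistrib)
  have "D \<bullet> (X ** X - Y ** Y) = trace (transpose D ** X ** D) + trace (transpose D ** Y ** D)"
  proof -
    have "D \<bullet> (X ** X - Y ** Y) = trace (D ** (X ** D)) + trace (D ** (D ** Y))"
      by (simp add: inner_matrix_eq_trace tD XY matrix_add_ldistrib trace_add)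
    also have "trace (D ** (D ** Y)) = trace ((D ** Y) ** D)" by (rule trace_mul_sym)
    finally show ?thesis by (simp add: tD matrix_mul_assoc)
  qed
  moreover have "m * (D \<bullet> D) \<le> trace (transpose D ** X ** D)"
    unfolding inner_matrix_self_columns trace_transpose_mul_mul sum_distrib_left
    by (intro sum_mono m)
  moreover have "0 \<le> trace (transpose D ** Y ** D)"
    unfolding trace_transpose_mul_mul by (intro sum_nonneg pos_def_quadratic_nonneg[OF Y])
  ultimately have "m * (D \<bullet> D) \<le> D \<bullet> (X ** X - Y ** Y)" by linarith
  also have "\<dots> \<le> norm D * norm (X ** X - Y ** Y)" by (rule norm_cauchy_schwarz)
  finally have "norm D * (m * norm D) \<le> norm D * norm (X ** X - Y ** Y)"
    by (simp add: power2_norm_eq_inner[symmetric] power2_eq_square mult_ac)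
  then show ?thesis
    by (cases "norm D = 0") (auto simp: D_def mult_le_cancel_left)
qed

theorem continuous_on_mat_sqrt: "continuous_on {A :: real^'n^'n. pos_def A} mat_sqrt"
  unfolding continuous_on_iff
proof (intro ballI allI impI)
  fix A :: "real^'n^'n" and e :: real
  assume A: "A \<in> {A. pos_def A}" and e: "e > 0"
  then obtain m where m: "m > 0" "\<And>x. m * (x \<bullet> x) \<le> x \<bullet> (mat_sqrt A *v x)"
    using pos_def_bounded_below[OF mat_sqrt_pos_def] by blast
  show "\<exists>d>0. \<forall>B\<in>{A. pos_def A}. dist B A < d \<longrightarrow> dist (mat_sqrt B) (mat_sqrt A) < e"
  proof (intro exI[of _ "m * e"] conjI ballI impI)
    show "m * e > 0" using m e by simp
    fix B assume B: "B \<in> {A. pos_def A}" and d: "dist B A < m * e"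
    have "m * dist (mat_sqrt B) (mat_sqrt A) \<le> dist B A"
      using pos_def_norm_diff_le_squares[OF mat_sqrt_pos_def mat_sqrt_pos_def m(2), of B] A B
      by (simp add: mat_sqrt_square dist_norm norm_minus_commute)
    then have "m * dist (mat_sqrt B) (mat_sqrt A) < m * e" using d by linarith
    then show "dist (mat_sqrt B) (mat_sqrt A) < e" using m(1) by simp
  qed
qed

section \<open>Traces of congruences\<close>

lemma trace_sym_pos_def_eq_sum:
  fixes X P Q :: "real^'n^'n"
  assumes X: "sym_mat X" and Q: "pos_def Q"
  defines "M \<equiv> X ** mat_sqrt Q"
  shows "trace (X ** P ** X ** Q) = (\<Sum>j\<in>UNIV. column j M \<bullet> (P *v column j M))"
proof -
  define V where "V = mat_sqrt Q"
  have V: "transpose V = V" "V ** V = Q"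
    using mat_sqrt_pos_def[OF Q] mat_sqrt_square[OF Q] by (auto simp: V_def pos_def_def sym_mat_def)
  have "trace (X ** P ** X ** Q) = trace (V ** (X ** P ** X ** V))"
    by (metis V(2) matrix_mul_assoc trace_mul_sym)
  also have "\<dots> = trace (transpose M ** P ** M)"
    using X V(1) by (simp add: M_def V_def[symmetric] matrix_transpose_mul sym_mat_def matrix_mul_assoc)
  finally show ?thesis by (simp add: trace_transpose_mul_mul)
qed

lemma trace_sym_pos_def_nonneg:
  fixes X P Q :: "real^'n^'n"
  assumes "sym_mat X" "pos_def P" "pos_def Q"
  shows "0 \<le> trace (X ** P ** X ** Q)"
  unfolding trace_sym_pos_def_eq_sum[OF assms(1,3)]
  by (intro sum_nonneg pos_def_quadratic_nonneg[OF assms(2)])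

lemma trace_sym_pos_def_eq_0D:
  fixes X P Q :: "real^'n^'n"
  assumes X: "sym_mat X" and P: "pos_def P" and Q: "pos_def Q"
    and 0: "trace (X ** P ** X ** Q) = 0"
  shows "X = 0"
proof -
  define M where "M = X ** mat_sqrt Q"
  have "\<forall>j\<in>UNIV. column j M \<bullet> (P *v column j M) = 0"
    using 0 pos_def_quadratic_nonneg[OF P]
    by (subst sum_nonneg_eq_0_iff[symmetric]) (simp_all add: trace_sym_pos_def_eq_sum[OF X Q] M_def)
  then have "column j M = 0" for j using P unfolding pos_def_def by (metis less_irrefl UNIV_I)
  then have "M = 0" by (simp add: vec_eq_iff column_def)
  then have "X ** (mat_sqrt Q ** matrix_inv (mat_sqrt Q)) = 0"
    by (simp add: M_def matrix_mul_assoc)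
  then show "X = 0"
    by (simp add: matrix_inv_right[OF pos_def_invertible[OF mat_sqrt_pos_def[OF Q]]])
qed

section \<open>The matrices \<open>(S\<^sup>1\<^sup>/\<^sup>2 A S\<^sup>1\<^sup>/\<^sup>2 + c\<^sup>2 I)\<^sup>1\<^sup>/\<^sup>2\<close>\<close>

definition sandwich_sqrt :: "real \<Rightarrow> real^'n^'n \<Rightarrow> real^'n^'n \<Rightarrow> real^'n^'n" where
  "sandwich_sqrt c S A = mat_sqrt (mat_sqrt S ** A ** mat_sqrt S + c\<^sup>2 *\<^sub>R mat 1)"

lemma pos_def_sandwich:
  fixes S A :: "real^'n^'n"
  assumes "pos_def S" "pos_def A"
  shows "pos_def (mat_sqrt S ** A ** mat_sqrt S + c\<^sup>2 *\<^sub>R mat 1)"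
  using assms mat_sqrt_pos_def
  by (intro pos_def_add_scaled_identity pos_def_congruence pos_def_sym pos_def_invertible) auto

lemma sandwich_sqrt_pos_def: "pos_def S \<Longrightarrow> pos_def A \<Longrightarrow> pos_def (sandwich_sqrt c S A)"
  unfolding sandwich_sqrt_def by (intro mat_sqrt_pos_def pos_def_sandwich)

lemma sandwich_sqrt_square:
  "pos_def S \<Longrightarrow> pos_def A \<Longrightarrow>
    sandwich_sqrt c S A ** sandwich_sqrt c S A = mat_sqrt S ** A ** mat_sqrt S + c\<^sup>2 *\<^sub>R mat 1"
  unfolding sandwich_sqrt_def by (intro mat_sqrt_square pos_def_sandwich)

lemma sandwich_sqrt_gt:
  fixes S A :: "real^'n^'n"
  assumes S: "pos_def S" and A: "pos_def A" and c: "0 \<le> c" and x: "x \<noteq> 0"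
  shows "c * (x \<bullet> x) < x \<bullet> (sandwich_sqrt c S A *v x)"
proof (rule pos_def_gt_of_square_gt[OF sandwich_sqrt_pos_def[OF S A] c _ x])
  fix y :: "real^'n" assume "y \<noteq> 0"
  have "pos_def (mat_sqrt S ** A ** mat_sqrt S)"
    using S A mat_sqrt_pos_def by (intro pos_def_congruence pos_def_sym pos_def_invertible) auto
  then have "0 < y \<bullet> ((mat_sqrt S ** A ** mat_sqrt S) *v y)"
    using \<open>y \<noteq> 0\<close> by (simp add: pos_def_def)
  then show "c\<^sup>2 * (y \<bullet> y) < y \<bullet> ((sandwich_sqrt c S A ** sandwich_sqrt c S A) *v y)"
    by (simp add: sandwich_sqrt_square[OF S A] matrix_vector_simps inner_add_right)
qed

lemma sandwich_sqrt_ge: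
  fixes S A :: "real^'n^'n"
  assumes "pos_def S" "pos_def A" "0 \<le> c"
  shows "c * (x \<bullet> x) \<le> x \<bullet> (sandwich_sqrt c S A *v x)"
  using sandwich_sqrt_gt[OF assms, of x] by (cases "x = 0") auto

lemma sandwich_sqrt_le:
  fixes S A :: "real^'n^'n"
  assumes S: "pos_def S" and A: "pos_def A" and s: "0 \<le> s" and b: "0 \<le> b"
    and S_le: "\<And>x. x \<bullet> (S *v x) \<le> b * (x \<bullet> x)" and A_le: "\<And>y. y \<bullet> (A *v y) \<le> s * (y \<bullet> y)"
  shows "x \<bullet> (sandwich_sqrt c S A *v x) \<le> sqrt (s * b + c\<^sup>2) * (x \<bullet> x)"
proof -
  define R where "R = mat_sqrt S"
  define P where "P = sandwich_sqrt c S A"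
  have R: "sym_mat R" "R ** R = S"
    using mat_sqrt_pos_def[OF S] mat_sqrt_square[OF S] by (simp_all add: R_def pos_def_sym)
  have "(P *v x) \<bullet> (P *v x) = x \<bullet> ((P ** P) *v x)"
    using sym_mat_inner[OF pos_def_sym[OF sandwich_sqrt_pos_def[OF S A]], where x = x and y = "P *v x"]
    by (simp add: P_def matrix_vector_mul_assoc)
  also have "\<dots> = (R *v x) \<bullet> (A *v (R *v x)) + c\<^sup>2 * (x \<bullet> x)"
    using sym_mat_inner[OF R(1)]
    by (simp add: P_def sandwich_sqrt_square[OF S A] R_def[symmetric] matrix_vector_simps inner_add_right)
  also have "\<dots> \<le> s * ((R *v x) \<bullet> (R *v x)) + c\<^sup>2 * (x \<bullet> x)"
    using A_le by simp
  also have "(R *v x) \<bullet> (R *v x) = x \<bullet> (S *v x)"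
    using sym_mat_inner[OF R(1), of x "R *v x"] by (simp flip: R(2) add: matrix_vector_mul_assoc)
  also have "s * (x \<bullet> (S *v x)) \<le> s * (b * (x \<bullet> x))"
    using S_le s by (simp add: mult_left_mono)
  finally have "(norm (P *v x))\<^sup>2 \<le> (sqrt (s * b + c\<^sup>2) * norm x)\<^sup>2"
    using s b by (simp add: power2_norm_eq_inner power_mult_distrib algebra_simps)
  then have "norm (P *v x) \<le> sqrt (s * b + c\<^sup>2) * norm x"
    by (rule power2_le_imp_le) (use s b in simp)
  then have "x \<bullet> (P *v x) \<le> norm x * (sqrt (s * b + c\<^sup>2) * norm x)"
    using norm_cauchy_schwarz[of x "P *v x"] by (smt (verit) mult_left_mono norm_ge_zero)
  then show ?thesis by (simp add: P_def power2_norm_eq_inner[symmetric] power2_eq_square mult_ac)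
qed

lemma continuous_on_sandwich_sqrt:
  fixes A :: "real^'n^'n"
  assumes A: "pos_def A"
  shows "continuous_on {S. pos_def S} (\<lambda>S. sandwich_sqrt c S A)"
proof -
  have mult: "continuous_on K (\<lambda>S. f S ** g S)"
    if "continuous_on K f" "continuous_on K g" for K and f g :: "real^'n^'n \<Rightarrow> real^'n^'n"
    unfolding matrix_matrix_mult_def by (intro continuous_intros that)
  have "continuous_on {S. pos_def S} (\<lambda>S. mat_sqrt S ** A ** mat_sqrt S + c\<^sup>2 *\<^sub>R mat 1)"
    by (intro continuous_intros mult continuous_on_mat_sqrt)
  moreover have "(\<lambda>S. mat_sqrt S ** A ** mat_sqrt S + c\<^sup>2 *\<^sub>R mat 1) ` {S. pos_def S} \<subseteq> {S. pos_def S}"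
    using pos_def_sandwich[OF _ A] by blast
  ultimately show ?thesis
    unfolding sandwich_sqrt_def by (rule continuous_on_compose2[OF continuous_on_mat_sqrt])
qed

lemma shifted_square_identity:
  fixes u y z :: "'a::real_vector"
  shows "(z - c *\<^sub>R y - c *\<^sub>R (y - c *\<^sub>R u)) + (2 * c) *\<^sub>R (y - c *\<^sub>R u) = z - c\<^sup>2 *\<^sub>R u"
proof -
  have "(2 * c) *\<^sub>R (y - c *\<^sub>R u) = c *\<^sub>R (y - c *\<^sub>R u) + c *\<^sub>R (y - c *\<^sub>R u)"
    by (metis mult_2 scaleR_add_left)
  then show ?thesis by (simp add: algebra_simps power2_eq_square)
qed

text \<open>With \<open>R = S\<^sup>1\<^sup>/\<^sup>2\<close> and \<open>P = sandwich_sqrt c S A\<close> one has \<open>G = R\<^sup>-\<^sup>1 (P - c I) R\<^sup>-\<^sup>1\<close>, and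
  \<open>(P - c I)\<^sup>2 + 2c (P - c I) = P\<^sup>2 - c\<^sup>2 I = R A R\<close>.\<close>

lemma sandwich_sqrt_quadratic_solution:
  fixes S A :: "real^'n^'n"
  assumes S: "pos_def S" and A: "pos_def A" and c: "0 \<le> c"
  defines "G \<equiv> matrix_inv (mat_sqrt S) ** sandwich_sqrt c S A ** matrix_inv (mat_sqrt S) - c *\<^sub>R matrix_inv S"
  shows "pos_def G" "G ** S ** G + (2 * c) *\<^sub>R G = A"
proof -
  define R where "R = mat_sqrt S"
  define Ri where "Ri = matrix_inv R"
  define P where "P = sandwich_sqrt c S A"
  define Q where "Q = P - c *\<^sub>R mat 1"
  have R: "pos_def R" "R ** R = S" using mat_sqrt_pos_def[OF S] mat_sqrt_square[OF S] by (simp_all add: R_def)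
  have RRi: "R *v (Ri *v y) = y" "Ri *v (R *v y) = y" for y
    using matrix_inv_right[OF pos_def_invertible[OF R(1)]] matrix_inv_left[OF pos_def_invertible[OF R(1)]]
    by (simp_all add: Ri_def matrix_vector_mul_assoc)
  have G: "G = Ri ** Q ** Ri"
    by (simp add: G_def Q_def Ri_def R_def P_def matrix_inv_mat_sqrt[OF S] matrix_eq matrix_vector_simps)
  have Q: "pos_def Q" unfolding pos_def_def
  proof (intro conjI allI impI)
    show "sym_mat Q"
      unfolding Q_def using sandwich_sqrt_pos_def[OF S A]
      by (intro sym_mat_diff sym_mat_scaleR sym_mat_mat pos_def_sym) (simp add: P_def)
    fix x :: "real^'n" assume "x \<noteq> 0"
    then show "x \<bullet> (Q *v x) > 0"
      using sandwich_sqrt_gt[OF S A c] by (simp add: Q_def P_def matrix_vector_simps inner_diff_right)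
  qed
  have Ri: "pos_def Ri" using pos_def_matrix_inv[OF R(1)] by (simp add: Ri_def)
  show "pos_def G"
    unfolding G by (rule pos_def_congruence[OF pos_def_sym[OF Ri] pos_def_invertible[OF Ri] Q])
  have PP: "P *v (P *v y) = R *v (A *v (R *v y)) + c\<^sup>2 *\<^sub>R y" for y
  proof -
    have "P *v (P *v y) = (R ** A ** R + c\<^sup>2 *\<^sub>R mat 1) *v y"
      by (simp add: P_def matrix_vector_mul_assoc sandwich_sqrt_square[OF S A] R_def[symmetric])
    then show ?thesis by (simp add: matrix_vector_simps)
  qed
  have "(G ** S ** G + (2 * c) *\<^sub>R G) *v x = A *v x" for x
  proof -
    define u where "u = Ri *v x"
    have "(G ** S ** G + (2 * c) *\<^sub>R G) *v x = Ri *v (Q *v (Q *v u) + (2 * c) *\<^sub>R (Q *v u))"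
      by (simp add: G flip: R(2) add: u_def matrix_vector_simps RRi)
    also have "Q *v (Q *v u) + (2 * c) *\<^sub>R (Q *v u) = P *v (P *v u) - c\<^sup>2 *\<^sub>R u"
      using shifted_square_identity[where z = "P *v (P *v u)" and y = "P *v u" and u = u and c = c]
      by (simp add: Q_def matrix_vector_simps)
    also have "\<dots> = R *v (A *v (R *v u))" by (simp add: PP)
    finally show ?thesis by (simp add: u_def RRi)
  qed
  then show "G ** S ** G + (2 * c) *\<^sub>R G = A" by (simp add: matrix_eq)
qed

section \<open>Uniqueness\<close>

text \<open>Subtracting the two equations and conjugating by \<open>G'\<^sup>-\<^sup>1\<close> and \<open>G\<^sup>-\<^sup>1\<close> expresses \<open>S - S'\<close>
  through \<open>E = G - G'\<close>; every term of \<open>tr (E (S - S'))\<close> then has the form \<open>-tr (E P E Q)\<close>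
  with \<open>P\<close>, \<open>Q\<close> positive definite.\<close>

lemma trace_diff_quadratic_solutions_nonpos:
  fixes G G' S S' A :: "real^'n^'n"
  assumes a: "0 \<le> a" and G: "pos_def G" and G': "pos_def G'" and S: "pos_def S" and S': "pos_def S'"
    and eq: "G ** S ** G + a *\<^sub>R G = A" and eq': "G' ** S' ** G' + a *\<^sub>R G' = A"
  shows "trace ((G - G') ** (S - S')) \<le> 0"
proof -
  define E where "E = G - G'"
  define D where "D = S - S'"
  define Gi where "Gi = matrix_inv G"
  define Gi' where "Gi' = matrix_inv G'"
  have inv: "G *v (Gi *v y) = y" "Gi' *v (G' *v y) = y" for y
    using matrix_inv_right[OF pos_def_invertible[OF G]] matrix_inv_left[OF pos_def_invertible[OF G']]
    by (simp_all add: Gi_def Gi'_def matrix_vector_mul_assoc)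
  have "a *\<^sub>R E + E ** S ** G + G' ** S' ** E + G' ** D ** G
      = (G ** S ** G + a *\<^sub>R G) - (G' ** S' ** G' + a *\<^sub>R G')"
    by (simp add: matrix_eq E_def D_def matrix_vector_simps algebra_simps)
  then have "Gi' ** (a *\<^sub>R E + E ** S ** G + G' ** S' ** E + G' ** D ** G) ** Gi = 0"
    by (simp add: eq eq')
  then have "a *\<^sub>R (Gi' ** E ** Gi) + Gi' ** E ** S + S' ** E ** Gi + D = 0"
    by (simp add: matrix_eq E_def D_def matrix_vector_simps inv algebra_simps)
  then have "D = - (a *\<^sub>R (Gi' ** E ** Gi)) - Gi' ** E ** S - S' ** E ** Gi"
    by (simp add: algebra_simps eq_neg_iff_add_eq_0)
  then have "trace (E ** D) = - (a * trace (E ** Gi' ** E ** Gi)) - trace (E ** Gi' ** E ** S)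
      - trace (E ** S' ** E ** Gi)"
    by (simp add: matrix_diff_ldistrib matrix_scalar_ac trace_sub trace_scaleR matrix_mul_assoc
        matrix_add_ldistrib trace_add matrix_mul_uminus_right trace_uminus scalar_matrix_assoc[symmetric])
  moreover have "sym_mat E" unfolding E_def by (intro sym_mat_diff pos_def_sym G G')
  moreover have "pos_def Gi" "pos_def Gi'"
    using pos_def_matrix_inv G G' by (simp_all add: Gi_def Gi'_def)
  ultimately have "trace (E ** D) \<le> 0"
    using a S S' trace_sym_pos_def_nonneg
    by (smt (verit) mult_nonneg_nonneg)
  then show ?thesis by (simp add: E_def D_def)
qed

theorem quadratic_system_unique:
  fixes S S' :: "real^'n^'n" and G G' A :: "'i \<Rightarrow> real^'n^'n"
  assumes a: "a > 0" and lam: "\<And>i. i \<in> I \<Longrightarrow> 0 \<le> lam i"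
    and S: "pos_def S" and S': "pos_def S'"
    and G: "\<And>i. i \<in> I \<Longrightarrow> pos_def (G i)" and G': "\<And>i. i \<in> I \<Longrightarrow> pos_def (G' i)"
    and eq: "\<And>i. i \<in> I \<Longrightarrow> G i ** S ** G i + a *\<^sub>R G i = A i"
    and eq': "\<And>i. i \<in> I \<Longrightarrow> G' i ** S' ** G' i + a *\<^sub>R G' i = A i"
    and sum: "(\<Sum>i\<in>I. lam i *\<^sub>R G i) + a *\<^sub>R matrix_inv S = mat 1"
    and sum': "(\<Sum>i\<in>I. lam i *\<^sub>R G' i) + a *\<^sub>R matrix_inv S' = mat 1"
  shows "S = S'"
proof -
  define D where "D = S - S'"
  define Si where "Si = matrix_inv S"
  define Si' where "Si' = matrix_inv S'"
  have inv: "Si *v (S *v y) = y" "S' *v (Si' *v y) = y" for y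
    using matrix_inv_left[OF pos_def_invertible[OF S]] matrix_inv_right[OF pos_def_invertible[OF S']]
    by (simp_all add: Si_def Si'_def matrix_vector_mul_assoc)
  have "(\<Sum>i\<in>I. lam i *\<^sub>R (G i - G' i)) = a *\<^sub>R (Si' - Si)"
    using sum sum' by (simp add: scaleR_diff_right sum_subtractf Si_def Si'_def algebra_simps eq_diff_eq)
  also have "Si' - Si = Si ** D ** Si'"
    by (simp add: matrix_eq D_def matrix_vector_simps inv)
  finally have weighted_diff: "(\<Sum>i\<in>I. lam i *\<^sub>R (G i - G' i)) = a *\<^sub>R (Si ** D ** Si')" .
  have "trace ((\<Sum>i\<in>I. lam i *\<^sub>R (G i - G' i)) ** D) = a * trace (Si ** (D ** Si' ** D))"
    unfolding weighted_diff by (simp add: trace_scaleR scalar_matrix_assoc[symmetric] matrix_mul_assoc)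
  also have "\<dots> = a * trace (D ** Si' ** D ** Si)" by (simp add: trace_mul_sym[of Si])
  finally have "trace ((\<Sum>i\<in>I. lam i *\<^sub>R (G i - G' i)) ** D) = a * trace (D ** Si' ** D ** Si)" .
  moreover have "trace ((\<Sum>i\<in>I. lam i *\<^sub>R (G i - G' i)) ** D) = (\<Sum>i\<in>I. lam i * trace ((G i - G' i) ** D))"
    by (simp add: matrix_mul_sum_left trace_sum trace_scaleR scalar_matrix_assoc[symmetric])
  moreover have "(\<Sum>i\<in>I. lam i * trace ((G i - G' i) ** D)) \<le> 0"
  proof (intro sum_nonpos mult_nonneg_nonpos)
    fix i assume i: "i \<in> I"
    show "0 \<le> lam i" using lam[OF i] .
    show "trace ((G i - G' i) ** D) \<le> 0"
      unfolding D_def using a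
      by (intro trace_diff_quadratic_solutions_nonpos[OF _ G[OF i] G'[OF i] S S' eq[OF i] eq'[OF i]]) simp
  qed
  moreover have "sym_mat D" unfolding D_def by (intro sym_mat_diff pos_def_sym S S')
  moreover have "pos_def Si" "pos_def Si'"
    using pos_def_matrix_inv S S' by (simp_all add: Si_def Si'_def)
  ultimately have "trace (D ** Si' ** D ** Si) = 0"
    using a trace_sym_pos_def_nonneg[of D Si' Si] by (smt (verit) mult_pos_pos)
  then have "D = 0" using trace_sym_pos_def_eq_0D \<open>sym_mat D\<close> \<open>pos_def Si\<close> \<open>pos_def Si'\<close> by blast
  then show ?thesis by (simp add: D_def)
qed

section \<open>Existence\<close>

definition loewner_interval :: "real \<Rightarrow> real \<Rightarrow> (real^'n^'n) set" where
  "loewner_interval a b =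
    {S. sym_mat S \<and> (\<forall>x. a * (x \<bullet> x) \<le> x \<bullet> (S *v x)) \<and> (\<forall>x. x \<bullet> (S *v x) \<le> b * (x \<bullet> x))}"

lemma pos_def_of_loewner_interval:
  fixes S :: "real^'n^'n"
  assumes "0 < a" "S \<in> loewner_interval a b"
  shows "pos_def S"
  unfolding pos_def_def
proof (intro conjI allI impI)
  show "sym_mat S" using assms(2) by (simp add: loewner_interval_def)
  fix x :: "real^'n" assume "x \<noteq> 0"
  then have "0 < a * (x \<bullet> x)" using assms(1) by simp
  also have "\<dots> \<le> x \<bullet> (S *v x)" using assms(2) by (simp add: loewner_interval_def)
  finally show "0 < x \<bullet> (S *v x)" .
qed

lemma closed_loewner_interval: "closed (loewner_interval a b :: (real^'n^'n) set)"
proof -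
  have quad: "continuous_on UNIV (\<lambda>S::real^'n^'n. x \<bullet> (S *v x))" for x
    unfolding matrix_vector_mult_def by (intro continuous_intros)
  have "loewner_interval a b = {S::real^'n^'n. transpose S = S}
      \<inter> (\<Inter>x. {S. a * (x \<bullet> x) \<le> x \<bullet> (S *v x)}) \<inter> (\<Inter>x. {S. x \<bullet> (S *v x) \<le> b * (x \<bullet> x)})"
    by (auto simp: loewner_interval_def sym_mat_def)
  moreover have "closed {S::real^'n^'n. transpose S = S}"
    unfolding transpose_def by (intro closed_Collect_eq continuous_intros)
  moreover have "closed {S::real^'n^'n. a * (x \<bullet> x) \<le> x \<bullet> (S *v x)}" for x
    using closed_Collect_le[OF continuous_on_const quad] by simp
  moreover have "closed {S::real^'n^'n. x \<bullet> (S *v x) \<le> b * (x \<bullet> x)}" for x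
    using closed_Collect_le[OF quad continuous_on_const] by simp
  ultimately show ?thesis by (simp add: closed_Int closed_INT)
qed

lemma sym_psd_two_abs_inner_le:
  fixes S :: "real^'n^'n"
  assumes "sym_mat S" "\<And>x. 0 \<le> x \<bullet> (S *v x)"
  shows "2 * \<bar>x \<bullet> (S *v y)\<bar> \<le> x \<bullet> (S *v x) + y \<bullet> (S *v y)"
proof -
  have "y \<bullet> (S *v x) = x \<bullet> (S *v y)" using sym_mat_inner[OF assms(1)] by (simp add: inner_commute)
  moreover have "0 \<le> (x + y) \<bullet> (S *v (x + y))" "0 \<le> (x - y) \<bullet> (S *v (x - y))" using assms(2) by auto
  ultimately show ?thesis
    by (simp add: matrix_vector_right_distrib matrix_vector_mult_diff_distrib inner_add_left
        inner_add_right inner_diff_left inner_diff_right abs_le_iff)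
qed

lemma bounded_loewner_interval:
  assumes "0 \<le> a"
  shows "bounded (loewner_interval a b :: (real^'n^'n) set)"
  unfolding bounded_iff
proof (intro exI ballI)
  fix S :: "real^'n^'n"
  assume "S \<in> loewner_interval a b"
  then have sym: "sym_mat S" and lower: "\<And>x. a * (x \<bullet> x) \<le> x \<bullet> (S *v x)"
    and upper: "\<And>x. x \<bullet> (S *v x) \<le> b * (x \<bullet> x)" by (auto simp: loewner_interval_def)
  have psd: "0 \<le> x \<bullet> (S *v x)" for x using lower[of x] assms by (smt (verit) inner_ge_zero mult_nonneg_nonneg)
  have diag: "axis i 1 \<bullet> (S *v axis i 1) \<le> b" for i :: 'n
    using upper[of "axis i 1"] by (simp add: inner_axis_axis)
  have entry: "\<bar>S $ i $ j\<bar> \<le> b" for i j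
  proof -
    have "S $ i $ j = axis i 1 \<bullet> (S *v axis j 1)"
      by (simp add: matrix_vector_mult_basis column_def inner_axis')
    then have "2 * \<bar>S $ i $ j\<bar> \<le> axis i 1 \<bullet> (S *v axis i 1) + axis j 1 \<bullet> (S *v axis j 1)"
      using sym_psd_two_abs_inner_le[OF sym psd] by simp
    then show ?thesis using diag[of i] diag[of j] by linarith
  qed
  have "norm S \<le> (\<Sum>i\<in>UNIV. norm (S $ i))" by (simp add: norm_vec_def L2_set_le_sum)
  also have "\<dots> \<le> (\<Sum>i\<in>(UNIV::'n set). \<Sum>j\<in>(UNIV::'n set). \<bar>S $ i $ j\<bar>)"
    by (intro sum_mono norm_le_l1_cart)
  also have "\<dots> \<le> (\<Sum>i\<in>(UNIV::'n set). \<Sum>j\<in>(UNIV::'n set). b)"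
    by (intro sum_mono entry)
  finally show "norm S \<le> real CARD('n) * (real CARD('n) * b)" by simp
qed

lemma convex_loewner_interval: "convex (loewner_interval a b :: (real^'n^'n) set)"
  unfolding convex_def
proof (intro ballI allI impI)
  fix A B :: "real^'n^'n" and u v :: real
  assume A: "A \<in> loewner_interval a b" and B: "B \<in> loewner_interval a b"
    and uv: "0 \<le> u" "0 \<le> v" "u + v = 1"
  have quad: "x \<bullet> ((u *\<^sub>R A + v *\<^sub>R B) *v x) = u * (x \<bullet> (A *v x)) + v * (x \<bullet> (B *v x))" for x
    by (simp add: matrix_vector_simps inner_add_right)
  have convex_comb: "r = u * r + v * r" for r using uv(3) by (metis distrib_right mult_1)
  have "sym_mat (u *\<^sub>R A + v *\<^sub>R B)"
    using A B by (intro sym_mat_add sym_mat_scaleR) (auto simp: loewner_interval_def)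
  moreover have "a * (x \<bullet> x) \<le> x \<bullet> ((u *\<^sub>R A + v *\<^sub>R B) *v x)" for x
  proof -
    have "u * (a * (x \<bullet> x)) \<le> u * (x \<bullet> (A *v x))" "v * (a * (x \<bullet> x)) \<le> v * (x \<bullet> (B *v x))"
      using A B uv by (auto simp: loewner_interval_def intro!: mult_left_mono)
    then show ?thesis unfolding quad using convex_comb[of "a * (x \<bullet> x)"] by linarith
  qed
  moreover have "x \<bullet> ((u *\<^sub>R A + v *\<^sub>R B) *v x) \<le> b * (x \<bullet> x)" for x
  proof -
    have "u * (x \<bullet> (A *v x)) \<le> u * (b * (x \<bullet> x))" "v * (x \<bullet> (B *v x)) \<le> v * (b * (x \<bullet> x))"
      using A B uv by (auto simp: loewner_interval_def intro!: mult_left_mono)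
    then show ?thesis unfolding quad using convex_comb[of "b * (x \<bullet> x)"] by linarith
  qed
  ultimately show "u *\<^sub>R A + v *\<^sub>R B \<in> loewner_interval a b"
    by (simp add: loewner_interval_def)
qed

lemma quadratic_form_le_entry_sum:
  fixes A :: "real^'n^'n"
  shows "y \<bullet> (A *v y) \<le> (\<Sum>i\<in>UNIV. \<Sum>j\<in>UNIV. \<bar>A $ i $ j\<bar>) * (y \<bullet> y)"
proof -
  define t where "t = (\<Sum>i\<in>UNIV. \<Sum>j\<in>UNIV. \<bar>A $ i $ j\<bar>)"
  have "norm (A *v y) \<le> onorm ((*v) A) * norm y"
    by (rule onorm[OF matrix_vector_mul_bounded_linear])
  also have "onorm ((*v) A) \<le> t"
    unfolding t_def by (rule onorm_le_matrix_component_sum)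
  finally have "norm (A *v y) \<le> t * norm y" by (simp add: mult_right_mono)
  then have "y \<bullet> (A *v y) \<le> norm y * (t * norm y)"
    using norm_cauchy_schwarz[of y "A *v y"] by (smt (verit) mult_left_mono norm_ge_zero)
  then show ?thesis by (simp add: t_def power2_norm_eq_inner[symmetric] power2_eq_square mult_ac)
qed

text \<open>The upper bound \<open>2c + s\<close> is reproduced because \<open>s (2c + s) + c\<^sup>2 = (c + s)\<^sup>2\<close>.\<close>

lemma barycenter_map_in_loewner_interval:
  fixes A :: "'i \<Rightarrow> real^'n^'n"
  assumes c: "0 < c" and lam: "\<And>i. i \<in> I \<Longrightarrow> 0 \<le> lam i" and sum_lam: "sum lam I = 1"
    and A: "\<And>i. i \<in> I \<Longrightarrow> pos_def (A i)" and s: "0 \<le> s"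
    and A_le: "\<And>i y. i \<in> I \<Longrightarrow> y \<bullet> (A i *v y) \<le> s * (y \<bullet> y)"
    and S: "S \<in> loewner_interval (2 * c) (2 * c + s)"
  shows "c *\<^sub>R mat 1 + (\<Sum>i\<in>I. lam i *\<^sub>R sandwich_sqrt c S (A i)) \<in> loewner_interval (2 * c) (2 * c + s)"
proof -
  define T where "T = c *\<^sub>R mat 1 + (\<Sum>i\<in>I. lam i *\<^sub>R sandwich_sqrt c S (A i))"
  have S_pd: "pos_def S" using c S by (intro pos_def_of_loewner_interval) auto
  have S_le: "\<And>x. x \<bullet> (S *v x) \<le> (2 * c + s) * (x \<bullet> x)" using S by (simp add: loewner_interval_def)
  have quad: "x \<bullet> (T *v x) = c * (x \<bullet> x) + (\<Sum>i\<in>I. lam i * (x \<bullet> (sandwich_sqrt c S (A i) *v x)))" for x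
    by (simp add: T_def matrix_vector_simps sum_matrix_vector_mult inner_add_right inner_sum_right)
  have average: "(\<Sum>i\<in>I. lam i * r) = r" for r using sum_lam by (simp flip: sum_distrib_right)
  have "sym_mat T"
    unfolding T_def using A S_pd sandwich_sqrt_pos_def
    by (intro sym_mat_add sym_mat_scaleR sym_mat_mat sym_mat_sum pos_def_sym) auto
  moreover have "2 * c * (x \<bullet> x) \<le> x \<bullet> (T *v x)" for x
  proof -
    have "(\<Sum>i\<in>I. lam i * (c * (x \<bullet> x))) \<le> (\<Sum>i\<in>I. lam i * (x \<bullet> (sandwich_sqrt c S (A i) *v x)))"
      using c lam by (intro sum_mono mult_left_mono sandwich_sqrt_ge[OF S_pd A]) auto
    then show ?thesis unfolding quad average by simp
  qed
  moreover have "x \<bullet> (T *v x) \<le> (2 * c + s) * (x \<bullet> x)" for x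
  proof -
    have "s * (2 * c + s) + c\<^sup>2 = (c + s)\<^sup>2" by (simp add: power2_eq_square algebra_simps)
    then have "sqrt (s * (2 * c + s) + c\<^sup>2) = c + s" using c s by simp
    moreover have "0 \<le> 2 * c + s" using c s by simp
    ultimately have "x \<bullet> (sandwich_sqrt c S (A i) *v x) \<le> (c + s) * (x \<bullet> x)" if "i \<in> I" for i
      using sandwich_sqrt_le[OF S_pd A[OF that] s _ S_le A_le[OF that], where c = c] by simp
    then have "(\<Sum>i\<in>I. lam i * (x \<bullet> (sandwich_sqrt c S (A i) *v x))) \<le> (\<Sum>i\<in>I. lam i * ((c + s) * (x \<bullet> x)))"
      using lam by (intro sum_mono mult_left_mono) auto
    then show ?thesis unfolding quad average by (simp add: algebra_simps)
  qed
  ultimately show ?thesis by (simp add: T_def[symmetric] loewner_interval_def)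
qed

theorem barycenter_fixed_point_exists:
  fixes A :: "'i \<Rightarrow> real^'n^'n"
  assumes c: "0 < c" and lam: "\<And>i. i \<in> I \<Longrightarrow> 0 \<le> lam i" and sum_lam: "sum lam I = 1"
    and A: "\<And>i. i \<in> I \<Longrightarrow> pos_def (A i)"
  obtains S where "pos_def S" "c *\<^sub>R mat 1 + (\<Sum>i\<in>I. lam i *\<^sub>R sandwich_sqrt c S (A i)) = S"
proof -
  have "finite I" using sum_lam by (metis sum.infinite zero_neq_one)
  define s where "s = (\<Sum>i\<in>I. \<Sum>a\<in>UNIV. \<Sum>b\<in>UNIV. \<bar>A i $ a $ b\<bar>)"
  have s: "0 \<le> s" unfolding s_def by (intro sum_nonneg) auto
  have A_le: "y \<bullet> (A i *v y) \<le> s * (y \<bullet> y)" if "i \<in> I" for i y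
  proof -
    have "(\<Sum>a\<in>UNIV. \<Sum>b\<in>UNIV. \<bar>A i $ a $ b\<bar>) \<le> s"
      unfolding s_def using \<open>finite I\<close> that by (intro member_le_sum) (auto intro: sum_nonneg)
    then show ?thesis
      using quadratic_form_le_entry_sum[of y "A i"] by (smt (verit) inner_ge_zero mult_right_mono)
  qed
  define K where "K = (loewner_interval (2 * c) (2 * c + s) :: (real^'n^'n) set)"
  define \<Phi> where "\<Phi> S = c *\<^sub>R mat 1 + (\<Sum>i\<in>I. lam i *\<^sub>R sandwich_sqrt c S (A i))" for S
  have K_pd: "K \<subseteq> {S. pos_def S}" using c pos_def_of_loewner_interval[of "2 * c"] by (auto simp: K_def)
  have "compact K"
    unfolding K_def compact_eq_bounded_closed using c
    by (intro conjI bounded_loewner_interval closed_loewner_interval) simp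
  moreover have "convex K" unfolding K_def by (rule convex_loewner_interval)
  moreover have "(2 * c) *\<^sub>R mat 1 \<in> K"
    using c s by (auto simp: K_def loewner_interval_def sym_mat_scaleR sym_mat_mat
        matrix_vector_simps intro: mult_right_mono)
  then have "K \<noteq> {}" by blast
  moreover have "continuous_on K \<Phi>"
    unfolding \<Phi>_def using A
    by (intro continuous_intros continuous_on_subset[OF continuous_on_sandwich_sqrt K_pd]) auto
  moreover have "\<Phi> \<in> K \<rightarrow> K"
  proof
    fix S assume "S \<in> K"
    then show "\<Phi> S \<in> K"
      unfolding K_def \<Phi>_def
      by (rule barycenter_map_in_loewner_interval[rotated -1]) (use c lam sum_lam A s A_le in auto)
  qed
  ultimately obtain S where "S \<in> K" "\<Phi> S = S" using brouwer by blast
  then show thesis using K_pd that by (auto simp: \<Phi>_def)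
qed

section \<open>The barycenter equation\<close>

lemma barycenter_equation_of_fixed_point:
  fixes S :: "real^'n^'n" and P :: "'i \<Rightarrow> real^'n^'n"
  assumes S: "pos_def S" and sum_lam: "sum lam I = 1"
    and fixed: "c *\<^sub>R mat 1 + (\<Sum>i\<in>I. lam i *\<^sub>R P i) = S"
  shows "(\<Sum>i\<in>I. lam i *\<^sub>R (matrix_inv (mat_sqrt S) ** P i ** matrix_inv (mat_sqrt S)
            + c *\<^sub>R matrix_inv S)) = mat 1"
proof -
  define R where "R = mat_sqrt S"
  define Ri where "Ri = matrix_inv R"
  have R: "pos_def R" "R ** R = S" using mat_sqrt_pos_def[OF S] mat_sqrt_square[OF S] by (simp_all add: R_def)
  have RRi: "R *v (Ri *v y) = y" "Ri *v (R *v y) = y" for y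
    using matrix_inv_right[OF pos_def_invertible[OF R(1)]] matrix_inv_left[OF pos_def_invertible[OF R(1)]]
    by (simp_all add: Ri_def matrix_vector_mul_assoc)
  have average: "(\<Sum>i\<in>I. lam i *\<^sub>R y) = y" for y :: "real^'n"
    using sum_lam by (simp flip: scaleR_sum_left)
  have P: "(\<Sum>i\<in>I. lam i *\<^sub>R (P i *v y)) = S *v y - c *\<^sub>R y" for y
    by (simp flip: fixed add: matrix_vector_simps sum_matrix_vector_mult)
  have "(\<Sum>i\<in>I. lam i *\<^sub>R (Ri ** P i ** Ri + c *\<^sub>R (Ri ** Ri))) *v x = x" for x
  proof -
    have "(\<Sum>i\<in>I. lam i *\<^sub>R (Ri ** P i ** Ri + c *\<^sub>R (Ri ** Ri))) *v x
        = Ri *v (\<Sum>i\<in>I. lam i *\<^sub>R (P i *v (Ri *v x))) + c *\<^sub>R (Ri *v (Ri *v x))"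
      by (simp add: sum_matrix_vector_mult matrix_vector_simps vec.sum sum.distrib average
          scaleR_add_right flip: scaleR_scaleR)
    also have "\<dots> = x" by (simp add: P matrix_vector_simps RRi flip: R(2))
    finally show ?thesis .
  qed
  then show ?thesis
    by (simp add: matrix_eq matrix_inv_mat_sqrt[OF S] Ri_def R_def)
qed

lemma sum_scaleR_shift:
  fixes X :: "'i \<Rightarrow> 'a::real_vector"
  assumes "sum lam I = 1"
  shows "(\<Sum>i\<in>I. lam i *\<^sub>R (X i + c *\<^sub>R T)) = (\<Sum>i\<in>I. lam i *\<^sub>R (X i - c *\<^sub>R T)) + (2 * c) *\<^sub>R T"
proof -
  have shift: "(\<Sum>i\<in>I. lam i *\<^sub>R (X i + r *\<^sub>R T)) = (\<Sum>i\<in>I. lam i *\<^sub>R X i) + r *\<^sub>R T" for r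
    using assms by (simp add: scaleR_add_right sum.distrib flip: scaleR_sum_left scaleR_scaleR)
  have "(\<Sum>i\<in>I. lam i *\<^sub>R (X i + c *\<^sub>R T)) = ((\<Sum>i\<in>I. lam i *\<^sub>R X i) + (- c) *\<^sub>R T) + (2 * c) *\<^sub>R T"
    by (simp only: shift add.assoc flip: scaleR_add_left) simp
  also have "(\<Sum>i\<in>I. lam i *\<^sub>R X i) + (- c) *\<^sub>R T = (\<Sum>i\<in>I. lam i *\<^sub>R (X i - c *\<^sub>R T))"
    using shift[of "- c"] by simp
  finally show ?thesis .
qed

theorem barycenter_equation_unique:
  fixes S S' :: "real^'n^'n" and A :: "'i \<Rightarrow> real^'n^'n"
  assumes c: "0 < c" and lam: "\<And>i. i \<in> I \<Longrightarrow> 0 \<le> lam i" and sum_lam: "sum lam I = 1"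
    and A: "\<And>i. i \<in> I \<Longrightarrow> pos_def (A i)" and S: "pos_def S" and S': "pos_def S'"
    and eq: "(\<Sum>i\<in>I. lam i *\<^sub>R (matrix_inv (mat_sqrt S) ** sandwich_sqrt c S (A i) ** matrix_inv (mat_sqrt S)
            + c *\<^sub>R matrix_inv S)) = mat 1"
    and eq': "(\<Sum>i\<in>I. lam i *\<^sub>R (matrix_inv (mat_sqrt S') ** sandwich_sqrt c S' (A i) ** matrix_inv (mat_sqrt S')
            + c *\<^sub>R matrix_inv S')) = mat 1"
  shows "S = S'"
proof -
  define G where "G T i = matrix_inv (mat_sqrt T) ** sandwich_sqrt c T (A i) ** matrix_inv (mat_sqrt T)
    - c *\<^sub>R matrix_inv T" for T :: "real^'n^'n" and i
  have "pos_def (G T i)" "G T i ** T ** G T i + (2 * c) *\<^sub>R G T i = A i"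
    if "pos_def T" "i \<in> I" for T i
    using sandwich_sqrt_quadratic_solution[OF that(1) A[OF that(2)]] c by (simp_all add: G_def)
  moreover have "(\<Sum>i\<in>I. lam i *\<^sub>R G S i) + (2 * c) *\<^sub>R matrix_inv S = mat 1"
    unfolding G_def sum_scaleR_shift[OF sum_lam, symmetric] by (rule eq)
  moreover have "(\<Sum>i\<in>I. lam i *\<^sub>R G S' i) + (2 * c) *\<^sub>R matrix_inv S' = mat 1"
    unfolding G_def sum_scaleR_shift[OF sum_lam, symmetric] by (rule eq')
  ultimately show ?thesis
    using c lam S S' by (intro quadratic_system_unique[of "2 * c" I lam S S' "G S" "G S'" A]) auto
qed

theorem proposition2:
  fixes \<epsilon> :: real and k :: nat
    and Sig :: "nat \<Rightarrow> real^'d^'d" and lam :: "nat \<Rightarrow> real"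
  assumes "\<epsilon> > 0"
    and "\<forall>i\<in>{1..k}. pos_def (Sig i)"
    and "\<forall>i\<in>{1..k}. lam i > 0"
    and "(\<Sum>i=1..k. lam i) = 1"
  shows "\<exists>!S :: real^'d^'d. pos_def S \<and>
    (\<Sum>i=1..k. lam i *\<^sub>R
       (matrix_inv (mat_sqrt S) **
          mat_sqrt (mat_sqrt S ** Sig i ** mat_sqrt S + ((\<epsilon>/4)^2) *\<^sub>R mat 1) **
          matrix_inv (mat_sqrt S)
        + (\<epsilon>/4) *\<^sub>R matrix_inv S)) = mat 1"
proof -
  define c where "c = \<epsilon> / 4"
  have c: "0 < c" using assms(1) by (simp add: c_def)
  have lam: "\<And>i. i \<in> {1..k} \<Longrightarrow> 0 \<le> lam i" using assms(3) by (simp add: less_imp_le)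
  have Sig: "\<And>i. i \<in> {1..k} \<Longrightarrow> pos_def (Sig i)" using assms(2) by blast
  obtain S where S: "pos_def S" and fixed: "c *\<^sub>R mat 1 + (\<Sum>i=1..k. lam i *\<^sub>R sandwich_sqrt c S (Sig i)) = S"
    by (rule barycenter_fixed_point_exists[OF c _ assms(4)]) (use lam Sig in auto)
  show ?thesis
    unfolding c_def[symmetric] sandwich_sqrt_def[symmetric]
  proof (rule ex1I[of _ S], intro conjI)
    show "pos_def S" by (rule S)
    show "(\<Sum>i=1..k. lam i *\<^sub>R (matrix_inv (mat_sqrt S) ** sandwich_sqrt c S (Sig i) ** matrix_inv (mat_sqrt S)
        + c *\<^sub>R matrix_inv S)) = mat 1"
      by (rule barycenter_equation_of_fixed_point[OF S assms(4) fixed])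
    then show "S' = S" if "pos_def S' \<and> (\<Sum>i=1..k. lam i *\<^sub>R (matrix_inv (mat_sqrt S') **
        sandwich_sqrt c S' (Sig i) ** matrix_inv (mat_sqrt S') + c *\<^sub>R matrix_inv S')) = mat 1" for S'
      using that by (intro barycenter_equation_unique[OF c _ assms(4) _ _ S]) (use lam Sig in auto)
  qed
qed

end
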